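(* Let $p(x,y)\in\mathbb{C}[x,y]$ be a nonzero homogeneous polynomial with $p(1,0)\neq0$, and let $\mathcal{Z}$ be the set of distinct complex roots of $p(x,1)$. Suppose there are five distinct $z_1,z_2,z_3,z_4,z_5\in\mathcal{Z}$ such that both $(z_1,z_2,z_3,z_4)$ and $(z_1,z_2,z_3,z_5)$ are critical with respect to $\mathcal{Z}$. Then every element of $\mathrm{Stab}_{\mathrm{GL}_2(\mathbb{C})}(p(x,y))$ is a scalar matrix (i.e. the image of the stabilizer in $\mathrm{PGL}_2(\mathbb{C})$ is trivial).
   Context: $\mathrm{GL}_2(\mathbb{C})$ acts on $\mathbb{C}[x,y]$ by $A\cdot p(x,y)=p(ax+by,cx+dy)$ for $A=\begin{pmatrix}a&b\\c&d\end{pmatrix}$. The cross ratio of distinct $z_1,z_2,z_3,z_4\in\mathbb{C}$ is $[z_1,z_2,z_3,z_4]=\frac{(z_1-z_3)(z_2-z_4)}{(z_1-z_4)(z_2-z_3)}$. Let $V_4=\{\mathrm{id},(12)(34),(13)(24),(14)(23)\}\subset S_4$. For a set $\mathcal{Z}\subset\mathbb{C}$ with at least four elements, a 4-tuple $\zeta=(z_1,z_2,z_3,z_4)$ of distinct elements of $\mathcal{Z}$ is critical (with respect to $\mathcal{Z}$) if for every 4-tuple $(y_1,y_2,y_3,y_4)$ of distinct elements of $\mathcal{Z}$, $[z_1,z_2,z_3,z_4]=[y_1,y_2,y_3,y_4]$ holds if and only if $(y_1,y_2,y_3,y_4)=(z_{\sigma(1)},z_{\sigma(2)},z_{\sigma(3)},z_{\sigma(4)})$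 for some $\sigma\in V_4$. *)

theory Defs
  imports Complex_Main
begin

definition hpoly :: "nat \<Rightarrow> (nat \<Rightarrow> complex) \<Rightarrow> complex \<Rightarrow> complex \<Rightarrow> complex" where
  "hpoly n coef x y = (\<Sum>k=0..n. coef k * x ^ k * y ^ (n - k))"

definition cross_ratio :: "complex \<Rightarrow> complex \<Rightarrow> complex \<Rightarrow> complex \<Rightarrow> complex" where
  "cross_ratio z1 z2 z3 z4 = ((z1 - z3) * (z2 - z4)) / ((z1 - z4) * (z2 - z3))"

definition distinct4 :: "complex \<Rightarrow> complex \<Rightarrow> complex \<Rightarrow> complex \<Rightarrow> bool" where
  "distinct4 z1 z2 z3 z4 = distinct [z1, z2, z3, z4]"

definition V4_orbit :: "complex \<Rightarrow> complex \<Rightarrow> complex \<Rightarrow> complex \<Rightarrow> (complex \<times> complex \<times> complex \<times> complex) set" where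
  "V4_orbit z1 z2 z3 z4 = {(z1, z2, z3, z4), (z2, z1, z4, z3), (z3, z4, z1, z2), (z4, z3, z2, z1)}"

definition critical :: "complex set \<Rightarrow> complex \<Rightarrow> complex \<Rightarrow> complex \<Rightarrow> complex \<Rightarrow> bool" where
  "critical Z z1 z2 z3 z4 \<longleftrightarrow>
     z1 \<in> Z \<and> z2 \<in> Z \<and> z3 \<in> Z \<and> z4 \<in> Z \<and> distinct4 z1 z2 z3 z4 \<and>
     (\<forall>y1\<in>Z. \<forall>y2\<in>Z. \<forall>y3\<in>Z. \<forall>y4\<in>Z. distinct4 y1 y2 y3 y4 \<longrightarrow>
        (cross_ratio z1 z2 z3 z4 = cross_ratio y1 y2 y3 y4 \<longleftrightarrow>
         (y1, y2, y3, y4) \<in> V4_orbit z1 z2 z3 z4))"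

text \<open>Stabilizer in GL_2(C) of p; a matrix ((a,b),(c,d)) is stored as (a,b,c,d).
  Equality of polynomials over C is equality of polynomial functions.\<close>
definition stab_GL2 :: "(complex \<Rightarrow> complex \<Rightarrow> complex) \<Rightarrow> (complex \<times> complex \<times> complex \<times> complex) set" where
  "stab_GL2 p = {(a, b, c, d). a * d - b * c \<noteq> 0 \<and>
      (\<forall>x y. p (a * x + b * y) (c * x + d * y) = p x y)}"

end

theory Submission
  imports Defs
begin

text \<open>A matrix in the stabilizer of p permutes the roots of p(x,1) by the Moebius map
  z \<mapsto> (az+b)/(cz+d); this map preserves cross ratios, so it sends each critical
  4-tuple into its V4-orbit. The two critical tuples share their first three entries but
  have different fourth entries, which forces the map to fix z1, z2, z3. A Moebius map
  with three fixed points is the identity, i.e. the matrix is scalar.\<close>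

definition moebius :: "complex \<Rightarrow> complex \<Rightarrow> complex \<Rightarrow> complex \<Rightarrow> complex \<Rightarrow> complex" where
  "moebius a b c d z = (a * z + b) / (c * z + d)"

lemma hpoly_scale: "hpoly n coef (t * x) (t * y) = t ^ n * hpoly n coef x y"
  unfolding hpoly_def sum_distrib_left
proof (rule sum.cong[OF refl])
  fix k assume "k \<in> {0..n}"
  then have "t ^ n = t ^ k * t ^ (n - k)" by (simp add: power_add[symmetric])
  then show "coef k * (t * x) ^ k * (t * y) ^ (n - k) = t ^ n * (coef k * x ^ k * y ^ (n - k))"
    by (simp add: power_mult_distrib)
qed

lemma hpoly_y_0: "hpoly n coef x 0 = coef n * x ^ n"
proof -
  have "hpoly n coef x 0 = (\<Sum>k\<in>{0..n}. if k = n then coef n * x ^ n else 0)"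
    unfolding hpoly_def by (rule sum.cong) auto
  then show ?thesis by simp
qed

lemma moebius_diff:
  assumes "c * u + d \<noteq> 0" "c * v + d \<noteq> 0"
  shows "moebius a b c d u - moebius a b c d v = (a * d - b * c) * (u - v) / ((c * u + d) * (c * v + d))"
  using assms unfolding moebius_def by (simp add: field_simps)

lemma inj_on_moebius:
  assumes "a * d - b * c \<noteq> 0" "\<And>z. z \<in> S \<Longrightarrow> c * z + d \<noteq> 0"
  shows "inj_on (moebius a b c d) S"
proof (rule inj_onI)
  fix u v assume "u \<in> S" "v \<in> S" "moebius a b c d u = moebius a b c d v"
  with moebius_diff[of c u d v a b] assms show "u = v" by simp
qed

lemma cross_ratio_moebius:
  assumes "c * u1 + d \<noteq> 0" "c * u2 + d \<noteq> 0" "c * u3 + d \<noteq> 0" "c * u4 + d \<noteq> 0"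
    and "a * d - b * c \<noteq> 0"
  shows "cross_ratio (moebius a b c d u1) (moebius a b c d u2) (moebius a b c d u3) (moebius a b c d u4)
       = cross_ratio u1 u2 u3 u4"
  unfolding cross_ratio_def using assms by (simp add: moebius_diff)

lemma moebius_fixing_three_points:
  fixes a b c d :: "'a :: idom"
  assumes fixed: "\<And>z. z \<in> {z1, z2, z3} \<Longrightarrow> a * z + b = z * (c * z + d)"
    and dist: "distinct [z1, z2, z3]"
  shows "b = 0 \<and> c = 0 \<and> a = d"
proof -
  have quad: "c * z\<^sup>2 + (d - a) * z - b = 0" if "z \<in> {z1, z2, z3}" for z
    using fixed[OF that] by (simp add: algebra_simps power2_eq_square)
  have chord: "c * (z1 + z) + (d - a) = 0" if "z \<in> {z2, z3}" for z
  proof -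
    have "(z1 - z) * (c * (z1 + z) + (d - a)) = 0"
      using quad[of z1] quad[of z] that by (auto simp: algebra_simps power2_eq_square)
    then show ?thesis using dist that by auto
  qed
  have "c * (z2 - z3) = (c * (z1 + z2) + (d - a)) - (c * (z1 + z3) + (d - a))"
    by (simp add: algebra_simps)
  also have "\<dots> = 0" using chord by simp
  finally have "c * (z2 - z3) = 0" .
  then have "c = 0" using dist by simp
  moreover from this have "d = a" using chord[of z2] by simp
  moreover from calculation have "b = 0" using quad[of z1] by simp
  ultimately show ?thesis by simp
qed

lemma critical_image_in_V4_orbit:
  assumes crit: "critical Z z1 z2 z3 z4"
    and maps: "f ` Z \<subseteq> Z" and inj: "inj_on f Z"
    and cr: "\<And>u1 u2 u3 u4. \<lbrakk>u1 \<in> Z; u2 \<in> Z; u3 \<in> Z; u4 \<in> Z\<rbrakk> \<Longrightarrow>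
       cross_ratio (f u1) (f u2) (f u3) (f u4) = cross_ratio u1 u2 u3 u4"
  shows "(f z1, f z2, f z3, f z4) \<in> V4_orbit z1 z2 z3 z4"
proof -
  have Z: "z1 \<in> Z" "z2 \<in> Z" "z3 \<in> Z" "z4 \<in> Z" and "distinct4 z1 z2 z3 z4"
    using crit unfolding critical_def by auto
  then have "distinct4 (f z1) (f z2) (f z3) (f z4)"
    using inj unfolding distinct4_def by (auto dest: inj_onD)
  then show ?thesis
    using crit maps Z cr[OF Z] unfolding critical_def by (metis image_subset_iff)
qed

lemma V4_orbits_agreeing_on_three:
  assumes "(w1, w2, w3, w4) \<in> V4_orbit z1 z2 z3 z4" "(w1, w2, w3, w5) \<in> V4_orbit z1 z2 z3 z5"
    and "distinct [z1, z2, z3, z4, z5]"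
  shows "w1 = z1 \<and> w2 = z2 \<and> w3 = z3"
  using assms unfolding V4_orbit_def by auto

lemma stab_GL2_det: "(a, b, c, d) \<in> stab_GL2 p \<Longrightarrow> a * d - b * c \<noteq> 0"
  unfolding stab_GL2_def by auto

lemma stab_GL2_invariant:
  "(a, b, c, d) \<in> stab_GL2 p \<Longrightarrow> p (a * x + b * y) (c * x + d * y) = p x y"
  unfolding stab_GL2_def by auto

context
  fixes n coef a b c d
  assumes stab: "(a, b, c, d) \<in> stab_GL2 (hpoly n coef)"
    and lead: "coef n \<noteq> 0"
begin

text \<open>A root z with cz + d = 0 would be sent to the point at infinity, which is not a root
  because p(1,0) \<noteq> 0.\<close>
lemma stab_GL2_denominator_nonzero:
  assumes root: "hpoly n coef z 1 = 0"
  shows "c * z + d \<noteq> 0"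
proof
  assume pole: "c * z + d = 0"
  have "a * z + b \<noteq> 0"
  proof
    assume "a * z + b = 0"
    with pole have "b = - a * z" "d = - c * z" by (simp_all add: eq_neg_iff_add_eq_0 add.commute)
    with stab_GL2_det[OF stab] show False by (simp add: algebra_simps)
  qed
  moreover have "hpoly n coef (a * z + b) 0 = 0"
    using stab_GL2_invariant[OF stab, of z 1] pole root by simp
  ultimately show False using lead by (simp add: hpoly_y_0)
qed

lemma stab_GL2_moebius_root:
  assumes root: "hpoly n coef z 1 = 0"
  shows "hpoly n coef (moebius a b c d z) 1 = 0"
proof -
  have w: "c * z + d \<noteq> 0" using stab_GL2_denominator_nonzero[OF root] .
  have "hpoly n coef ((c * z + d) * moebius a b c d z) ((c * z + d) * 1) = 0"
    using stab_GL2_invariant[OF stab, of z 1] root w by (simp add: moebius_def)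
  then show ?thesis using w by (simp only: hpoly_scale) simp
qed

end

theorem lemma5p1:
  fixes n :: nat and coef :: "nat \<Rightarrow> complex" and z1 z2 z3 z4 z5 :: complex
  assumes nonzero: "\<exists>k\<le>n. coef k \<noteq> 0"
    and lead: "hpoly n coef 1 0 \<noteq> 0"
    and crit1: "critical {z. hpoly n coef z 1 = 0} z1 z2 z3 z4"
    and crit2: "critical {z. hpoly n coef z 1 = 0} z1 z2 z3 z5"
    and dist: "distinct [z1, z2, z3, z4, z5]"
  shows "\<forall>(a, b, c, d) \<in> stab_GL2 (hpoly n coef). b = 0 \<and> c = 0 \<and> a = d"
proof clarify
  fix a b c d assume stab: "(a, b, c, d) \<in> stab_GL2 (hpoly n coef)"
  define Z where "Z = {z. hpoly n coef z 1 = 0}"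
  define f where "f = moebius a b c d"
  have lead': "coef n \<noteq> 0" using lead by (simp add: hpoly_y_0)
  note den = stab_GL2_denominator_nonzero[OF stab lead']
  have maps: "f ` Z \<subseteq> Z"
    using stab_GL2_moebius_root[OF stab lead'] by (auto simp: f_def Z_def)
  have inj: "inj_on f Z"
    unfolding f_def by (rule inj_on_moebius[OF stab_GL2_det[OF stab]]) (simp add: den Z_def)
  have cr: "cross_ratio (f u1) (f u2) (f u3) (f u4) = cross_ratio u1 u2 u3 u4"
    if "u1 \<in> Z" "u2 \<in> Z" "u3 \<in> Z" "u4 \<in> Z" for u1 u2 u3 u4
    using that unfolding f_def Z_def
    by (intro cross_ratio_moebius stab_GL2_det[OF stab] den) auto
  have "f z1 = z1 \<and> f z2 = z2 \<and> f z3 = z3"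
    using critical_image_in_V4_orbit[OF crit1[folded Z_def] maps inj cr]
      critical_image_in_V4_orbit[OF crit2[folded Z_def] maps inj cr] dist
    by (rule V4_orbits_agreeing_on_three)
  moreover have "z \<in> Z" if "z \<in> {z1, z2, z3}" for z
    using that crit1 unfolding critical_def Z_def by auto
  ultimately have "a * z + b = z * (c * z + d)" if "z \<in> {z1, z2, z3}" for z
    using that den[of z] unfolding f_def moebius_def Z_def by (auto simp: field_simps)
  then show "b = 0 \<and> c = 0 \<and> a = d"
    by (rule moebius_fixing_three_points) (use dist in auto)
qed

end
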